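(* Let $0\le b\le1$, $M>0$ and $0\le\alpha<1$, and let $r_0=r_0(\alpha)$ be the real root in $(0,1)$ of the equation \[2M\left(1+\frac{\alpha(1-r)\log(1-r)}{r}\right)=\big(2(1+M)(1-\alpha)+(2-\alpha)(M-4b)r\big)(1-r).\] Let $\mathcal{F}$ be the class of functions $f\in\mathcal{A}_b$, $f(z)=z+\sum_{n\ge2}a_nz^n$, with $|a_n|\le M/n$ for all $n\ge3$. Then: (i) every $f\in\mathcal{F}$ satisfies $\left|\frac{zf'(z)}{f(z)}-1\right|\le1-\alpha$ for $|z|\le r_0$; (ii) $r_0(\alpha)$ is the radius of starlikeness of order $\alpha$ of $\mathcal{F}$; (iii) $r_0(1/2)$ is the radius of parabolic starlikeness of $\mathcal{F}$. All results are sharp, with extremal function $f_0(z)=(1+M)z+(M/2-2b)z^2+M\log(1-z)=z-2bz^2-M\sum_{n\ge3}z^n/n$.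
   Context: $\mathbb{D}=\{z\in\mathbb{C}:|z|<1\}$; $\log(1-z)$ denotes the principal branch on $\mathbb{D}$, i.e. the branch vanishing at $z=0$. For $0\le b\le1$, $\mathcal{A}_b$ is the class of analytic functions $f$ on $\mathbb{D}$ of the form $f(z)=z+a_2z^2+a_3z^3+\cdots$ with $|a_2|=2b$. For a class $\mathcal{F}$ of analytic functions on $\mathbb{D}$ normalized by $f(0)=0$, $f'(0)=1$, and $0\le\alpha<1$, the radius of starlikeness of order $\alpha$ of $\mathcal{F}$ is the supremum of $r\in(0,1]$ such that every $f\in\mathcal{F}$ satisfies $f(z)\ne0$ for $0<|z|<r$ and $\operatorname{Re}\big(zf'(z)/f(z)\big)>\alpha$ for $|z|<r$ (the quotient being $1$ at $z=0$). The radius of parabolic starlikeness of $\mathcal{F}$ is the supremum of $r\in(0,1]$ such that every $f\in\mathcal{F}$ satisfies $\operatorname{Re}\big(zf'(z)/f(z)\big)>\left|zf'(z)/f(z)-1\right|$ for $|z|<r$. *)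

theory Defs
  imports "HOL-Analysis.Analysis"
begin

definition coeff0 :: "(complex \<Rightarrow> complex) \<Rightarrow> nat \<Rightarrow> complex" where
  "coeff0 f n = (deriv ^^ n) f 0 / of_nat (fact n)"

definition class_A :: "real \<Rightarrow> (complex \<Rightarrow> complex) set" where
  "class_A b = {f. f holomorphic_on ball 0 1 \<and> f 0 = 0 \<and> deriv f 0 = 1
                  \<and> norm (coeff0 f 2) = 2 * b}"

definition class_F :: "real \<Rightarrow> real \<Rightarrow> (complex \<Rightarrow> complex) set" where
  "class_F b M = {f \<in> class_A b. \<forall>n\<ge>3. norm (coeff0 f n) \<le> M / real n}"

definition sq :: "(complex \<Rightarrow> complex) \<Rightarrow> complex \<Rightarrow> complex" where
  "sq f z = (if z = 0 then 1 else z * deriv f z / f z)"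

definition starlike_radius :: "real \<Rightarrow> (complex \<Rightarrow> complex) set \<Rightarrow> real" where
  "starlike_radius \<alpha> F = Sup {r. 0 < r \<and> r \<le> 1 \<and> (\<forall>f\<in>F.
      (\<forall>z. 0 < norm z \<and> norm z < r \<longrightarrow> f z \<noteq> 0) \<and>
      (\<forall>z. norm z < r \<longrightarrow> Re (sq f z) > \<alpha>))}"

definition parabolic_radius :: "(complex \<Rightarrow> complex) set \<Rightarrow> real" where
  "parabolic_radius F = Sup {r. 0 < r \<and> r \<le> 1 \<and> (\<forall>f\<in>F.
      \<forall>z. norm z < r \<longrightarrow> Re (sq f z) > norm (sq f z - 1))}"

definition r0_eq :: "real \<Rightarrow> real \<Rightarrow> real \<Rightarrow> real \<Rightarrow> bool" where
  "r0_eq M b \<alpha> r \<longleftrightarrow>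
     2 * M * (1 + \<alpha> * (1 - r) * ln (1 - r) / r)
       = (2 * (1 + M) * (1 - \<alpha>) + (2 - \<alpha>) * (M - 4 * b) * r) * (1 - r)"

definition r0 :: "real \<Rightarrow> real \<Rightarrow> real \<Rightarrow> real" where
  "r0 M b \<alpha> = (THE r. 0 < r \<and> r < 1 \<and> r0_eq M b \<alpha> r)"

definition f0 :: "real \<Rightarrow> real \<Rightarrow> complex \<Rightarrow> complex" where
  "f0 M b z = (1 + of_real M) * z + of_real (M / 2 - 2 * b) * z ^ 2 + of_real M * Ln (1 - z)"

end

theory Submission
  imports Defs "HOL-Complex_Analysis.Complex_Analysis"
begin

text \<open>
  Write $f(z)/z = 1 + \sum_{n \ge 1} a_{n+1} z^n$. The hypotheses give $|a_{n+1}| \le d_n$ with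
  $d_1 = 2b$ and $d_n = M/(n+1)$ for $n \ge 2$. With $\varphi(r) = \sum d_n r^n$ and
  $\psi(r) = \sum (n+1) d_n r^n$ this yields $|f(z)/z - 1| \le \varphi(|z|)$ and
  $|f'(z) - f(z)/z| \le \psi(|z|) - \varphi(|z|)$, hence
  $|z f'(z)/f(z) - 1| \le (\psi - \varphi)/(1 - \varphi)$. This is at most $1 - \alpha$ exactly when
  $G_\alpha = \psi - \alpha \varphi \le 1 - \alpha$; $G_\alpha$ is a power series with nonnegative
  coefficients, hence strictly increasing, and in closed form $G_\alpha(r) = 1 - \alpha$ is the
  equation defining $r_0$. The extremal function has $a_{n+1} = -d_n$, so on the real segment all
  estimates are equalities: $r f_0'(r)/f_0(r) = (1 - \psi(r))/(1 - \varphi(r))$, which equals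
  $\alpha$ at $r_0$ and drops below $\alpha$ just beyond it.
\<close>

lemma summable_powser_bounded_coeffs:
  fixes c :: "nat \<Rightarrow> real"
  assumes "\<And>n. \<bar>c n\<bar> \<le> K" "\<bar>x\<bar> < 1"
  shows "summable (\<lambda>n. c n * x ^ n)"
proof (rule summable_comparison_test')
  show "summable (\<lambda>n. K * \<bar>x\<bar> ^ n)"
    using assms(2) by (intro summable_mult summable_geometric) auto
  show "norm (c n * x ^ n) \<le> K * \<bar>x\<bar> ^ n" for n
    using assms(1)[of n] by (simp add: abs_mult power_abs mult_right_mono)
qed

lemma isCont_powser_bounded_coeffs:
  fixes c :: "nat \<Rightarrow> real"
  assumes "\<And>n. \<bar>c n\<bar> \<le> K" "\<bar>x\<bar> < 1"
  shows "isCont (\<lambda>x. \<Sum>n. c n * x ^ n) x"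
proof (rule isCont_powser)
  show "summable (\<lambda>n. c n * ((\<bar>x\<bar> + 1) / 2) ^ n)"
    using assms by (intro summable_powser_bounded_coeffs[where K = K]) auto
  show "norm x < norm ((\<bar>x\<bar> + 1) / 2)"
    using assms by auto
qed

lemma powser_strict_mono_nonneg_coeffs:
  fixes c :: "nat \<Rightarrow> real"
  assumes nonneg: "\<And>n. 0 \<le> c n" and pos: "0 < c k" "0 < k"
    and summable: "summable (\<lambda>n. c n * y ^ n)" and "0 \<le> x" "x < y"
  shows "(\<Sum>n. c n * x ^ n) < (\<Sum>n. c n * y ^ n)"
proof -
  have mono: "c n * x ^ n \<le> c n * y ^ n" for n
    using nonneg assms(5,6) by (intro mult_left_mono power_mono) auto
  have summable_x: "summable (\<lambda>n. c n * x ^ n)"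
    by (rule summable_comparison_test'[OF summable]) (use nonneg assms(5) mono in auto)
  have "c k * x ^ k < c k * y ^ k"
    using pos assms(5,6) by (intro mult_strict_left_mono power_strict_mono) auto
  then have "0 < (\<Sum>n. c n * y ^ n - c n * x ^ n)"
    using mono by (subst suminf_pos_iff) (auto intro: summable_diff summable summable_x)
  then show ?thesis
    using suminf_diff[OF summable summable_x] by simp
qed

lemma Sup_eq_threshold:
  fixes r :: real
  assumes "0 < r" "r \<le> 1" "P r" "\<And>s. r < s \<Longrightarrow> \<not> P s"
  shows "Sup {s. 0 < s \<and> s \<le> 1 \<and> P s} = r"
  by (rule cSup_eq_maximum) (use assms in \<open>auto simp: not_less[symmetric]\<close>)

lemma coeff0_sums:
  assumes "f holomorphic_on ball 0 1" "norm z < 1"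
  shows "(\<lambda>n. coeff0 f n * z ^ n) sums f z"
  using holomorphic_power_series[OF assms(1), of z] assms(2) by (simp add: coeff0_def)

lemma deriv_coeff0_sums:
  assumes "f holomorphic_on ball 0 1" "norm z < 1"
  shows "(\<lambda>n. of_nat (Suc n) * coeff0 f (Suc n) * z ^ n) sums deriv f z"
proof -
  have "deriv f holomorphic_on ball 0 1"
    using assms(1) by (rule holomorphic_deriv) simp
  then have "(\<lambda>n. coeff0 (deriv f) n * z ^ n) sums deriv f z"
    using assms(2) by (rule coeff0_sums)
  moreover have "coeff0 (deriv f) n = of_nat (Suc n) * coeff0 f (Suc n)" for n
  proof -
    have "(deriv ^^ Suc n) f = (deriv ^^ n) (deriv f)"
      by (simp only: funpow_Suc_right comp_def)
    moreover have "(fact (Suc n) :: complex) = of_nat (Suc n) * fact n"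
      by (simp only: fact_Suc of_nat_mult)
    moreover have "(of_nat (Suc n) :: complex) \<noteq> 0"
      by (rule of_nat_neq_0)
    ultimately show ?thesis
      by (simp add: coeff0_def del: of_nat_Suc fact_Suc funpow.simps)
  qed
  ultimately show ?thesis
    by simp
qed

lemma quotient_coeff0_sums:
  assumes "f holomorphic_on ball 0 1" "f 0 = 0" "z \<noteq> 0" "norm z < 1"
  shows "(\<lambda>n. coeff0 f (Suc n) * z ^ n) sums (f z / z)"
proof -
  have "(\<lambda>n. coeff0 f n * z ^ n) sums f z"
    using assms(1,4) by (rule coeff0_sums)
  moreover have "coeff0 f 0 = 0"
    using assms(2) by (simp add: coeff0_def)
  ultimately have "(\<lambda>n. coeff0 f (Suc n) * z ^ Suc n / z) sums (f z / z)"
    by (intro sums_divide) (subst sums_Suc_iff, simp)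
  then show ?thesis
    using assms(3) by simp
qed

lemma norm_quotient_minus_one_le:
  fixes f :: "complex \<Rightarrow> complex" and d :: "nat \<Rightarrow> real"
  assumes hol: "f holomorphic_on ball 0 1" and "f 0 = 0" "deriv f 0 = 1"
    and coeff: "\<And>n. 1 \<le> n \<Longrightarrow> norm (coeff0 f (Suc n)) \<le> d n" and "d 0 = 0"
    and majorant: "(\<lambda>n. d n * norm z ^ n) sums s"
    and z: "z \<noteq> 0" "norm z < 1"
  shows "norm (f z / z - 1) \<le> s"
proof (rule norm_sums_le[OF _ majorant])
  show "(\<lambda>n. coeff0 f (Suc n) * z ^ n - (if n = 0 then 1 else 0)) sums (f z / z - 1)"
    using quotient_coeff0_sums[OF hol \<open>f 0 = 0\<close> z] sums_single[of 0 "\<lambda>_. 1 :: complex"]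
    by (rule sums_diff)
  show "norm (coeff0 f (Suc n) * z ^ n - (if n = 0 then 1 else 0)) \<le> d n * norm z ^ n" for n
  proof (cases "n = 0")
    case True
    then show ?thesis
      using assms(3,5) by (simp add: coeff0_def)
  next
    case False
    then show ?thesis
      using coeff[of n] by (simp add: norm_mult norm_power mult_right_mono)
  qed
qed

lemma norm_deriv_minus_quotient_le:
  fixes f :: "complex \<Rightarrow> complex" and d :: "nat \<Rightarrow> real"
  assumes hol: "f holomorphic_on ball 0 1" and "f 0 = 0"
    and coeff: "\<And>n. 1 \<le> n \<Longrightarrow> norm (coeff0 f (Suc n)) \<le> d n"
    and majorant: "(\<lambda>n. real n * d n * norm z ^ n) sums t"
    and z: "z \<noteq> 0" "norm z < 1"
  shows "norm (deriv f z - f z / z) \<le> t"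
proof (rule norm_sums_le[OF _ majorant])
  show "(\<lambda>n. of_nat (Suc n) * coeff0 f (Suc n) * z ^ n - coeff0 f (Suc n) * z ^ n)
      sums (deriv f z - f z / z)"
    using deriv_coeff0_sums[OF hol z(2)] quotient_coeff0_sums[OF hol \<open>f 0 = 0\<close> z]
    by (rule sums_diff)
  show "norm (of_nat (Suc n) * coeff0 f (Suc n) * z ^ n - coeff0 f (Suc n) * z ^ n)
      \<le> real n * d n * norm z ^ n" for n
  proof (cases "n = 0")
    case False
    have "of_nat (Suc n) * coeff0 f (Suc n) * z ^ n - coeff0 f (Suc n) * z ^ n
        = of_nat n * (coeff0 f (Suc n) * z ^ n)"
      by (simp add: algebra_simps)
    then show ?thesis
      using coeff[of n] False
      by (simp add: norm_mult norm_power mult_left_mono mult_right_mono)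
  qed simp
qed

lemma sq_minus_one_le_majorant:
  fixes f :: "complex \<Rightarrow> complex" and d :: "nat \<Rightarrow> real"
  assumes hol: "f holomorphic_on ball 0 1" and "f 0 = 0" "deriv f 0 = 1"
    and coeff: "\<And>n. 1 \<le> n \<Longrightarrow> norm (coeff0 f (Suc n)) \<le> d n" and "d 0 = 0"
    and majorant: "(\<lambda>n. d n * norm z ^ n) sums s" "(\<lambda>n. real n * d n * norm z ^ n) sums t"
    and "s < 1" and z: "z \<noteq> 0" "norm z < 1"
  shows "f z \<noteq> 0 \<and> norm (sq f z - 1) \<le> t / (1 - s)"
proof -
  define q where "q = f z / z"
  have "norm (q - 1) \<le> s"
    unfolding q_def by (rule norm_quotient_minus_one_le) fact+
  then have q: "1 - s \<le> norm q"
    using norm_triangle_ineq2[of 1 "1 - q"] by (simp add: norm_minus_commute)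
  have t: "norm (deriv f z - q) \<le> t"
    unfolding q_def by (rule norm_deriv_minus_quotient_le) fact+
  have "q \<noteq> 0"
    using q \<open>s < 1\<close> by auto
  then have "f z \<noteq> 0" and "sq f z - 1 = (deriv f z - q) / q"
    using z by (auto simp: q_def sq_def field_simps)
  moreover have "norm (deriv f z - q) / norm q \<le> t / (1 - s)"
    by (rule frac_le) (use t q \<open>s < 1\<close> in \<open>auto intro: order_trans[OF norm_ge_zero]\<close>)
  ultimately show ?thesis
    by (simp add: norm_divide)
qed

text \<open>These are $d_n$, $\varphi$, $\psi$ and $G_\alpha$ above; note the index shift $|a_{n+1}| \le d_n$.\<close>

definition majorant_coeff :: "real \<Rightarrow> real \<Rightarrow> nat \<Rightarrow> real" where
  "majorant_coeff b M n = (if n = 1 then 2 * b else if 2 \<le> n then M / real (n + 1) else 0)"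

definition majorant_sum :: "real \<Rightarrow> real \<Rightarrow> real \<Rightarrow> real" where
  "majorant_sum b M x = (\<Sum>n. majorant_coeff b M n * x ^ n)"

definition majorant_deriv_sum :: "real \<Rightarrow> real \<Rightarrow> real \<Rightarrow> real" where
  "majorant_deriv_sum b M x = (\<Sum>n. real (Suc n) * majorant_coeff b M n * x ^ n)"

definition majorant_gauge :: "real \<Rightarrow> real \<Rightarrow> real \<Rightarrow> real \<Rightarrow> real" where
  "majorant_gauge b M \<alpha> x = majorant_deriv_sum b M x - \<alpha> * majorant_sum b M x"

text \<open>At \<open>n = 0\<close> the division by zero yields the correct coefficient \<open>0\<close>.\<close>

definition f0_coeff :: "real \<Rightarrow> real \<Rightarrow> nat \<Rightarrow> complex" where
  "f0_coeff b M n = of_real (if n = 1 then 1 else if n = 2 then - 2 * b else - M / real n)"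

context
  fixes b M :: real
  assumes b: "0 \<le> b" and M: "0 < M"
begin

lemma majorant_coeff_nonneg: "0 \<le> majorant_coeff b M n"
  using b M by (simp add: majorant_coeff_def)

lemma abs_Suc_times_majorant_coeff_le: "\<bar>real (Suc n) * majorant_coeff b M n\<bar> \<le> 4 * b + M"
  using b M by (simp add: majorant_coeff_def)

lemma abs_majorant_coeff_le: "\<bar>majorant_coeff b M n\<bar> \<le> 4 * b + M"
proof -
  have "1 * majorant_coeff b M n \<le> real (Suc n) * majorant_coeff b M n"
    by (rule mult_right_mono) (simp_all add: majorant_coeff_nonneg)
  then show ?thesis
    using abs_Suc_times_majorant_coeff_le[of n] majorant_coeff_nonneg[of n] by simp
qed

lemma summable_majorant_sum: "\<bar>x\<bar> < 1 \<Longrightarrow> summable (\<lambda>n. majorant_coeff b M n * x ^ n)"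
  by (rule summable_powser_bounded_coeffs[OF abs_majorant_coeff_le])

lemma summable_majorant_deriv_sum:
  "\<bar>x\<bar> < 1 \<Longrightarrow> summable (\<lambda>n. real (Suc n) * majorant_coeff b M n * x ^ n)"
  by (rule summable_powser_bounded_coeffs[OF abs_Suc_times_majorant_coeff_le])

lemma isCont_majorant_sum: "\<bar>x\<bar> < 1 \<Longrightarrow> isCont (majorant_sum b M) x"
  unfolding majorant_sum_def[abs_def]
  by (rule isCont_powser_bounded_coeffs[OF abs_majorant_coeff_le])

lemma isCont_majorant_deriv_sum: "\<bar>x\<bar> < 1 \<Longrightarrow> isCont (majorant_deriv_sum b M) x"
  unfolding majorant_deriv_sum_def[abs_def]
  by (rule isCont_powser_bounded_coeffs[OF abs_Suc_times_majorant_coeff_le])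

lemma majorant_sum_sums: "\<bar>x\<bar> < 1 \<Longrightarrow> (\<lambda>n. majorant_coeff b M n * x ^ n) sums majorant_sum b M x"
  unfolding majorant_sum_def by (rule summable_sums summable_majorant_sum)+

lemma majorant_moment_sums:
  assumes "\<bar>x\<bar> < 1"
  shows "(\<lambda>n. real n * majorant_coeff b M n * x ^ n)
    sums (majorant_deriv_sum b M x - majorant_sum b M x)"
proof -
  have "(\<lambda>n. real (Suc n) * majorant_coeff b M n * x ^ n - majorant_coeff b M n * x ^ n)
      sums (majorant_deriv_sum b M x - majorant_sum b M x)"
    unfolding majorant_deriv_sum_def majorant_sum_def
    using assms by (intro sums_diff summable_sums summable_majorant_sum summable_majorant_deriv_sum)
  then show ?thesis
    by (simp add: algebra_simps)
qed

lemma majorant_sum_nonneg: "0 \<le> x \<Longrightarrow> x < 1 \<Longrightarrow> 0 \<le> majorant_sum b M x"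
  unfolding majorant_sum_def
  by (intro suminf_nonneg summable_majorant_sum) (simp_all add: majorant_coeff_nonneg)

lemma majorant_sum_le_moment:
  assumes "0 \<le> x" "x < 1"
  shows "majorant_sum b M x \<le> majorant_deriv_sum b M x - majorant_sum b M x"
proof (rule sums_le[OF _ majorant_sum_sums majorant_moment_sums])
  show "majorant_coeff b M n * x ^ n \<le> real n * majorant_coeff b M n * x ^ n" for n
  proof (cases "n = 0")
    case False
    have "1 * (majorant_coeff b M n * x ^ n) \<le> real n * (majorant_coeff b M n * x ^ n)"
      using False assms majorant_coeff_nonneg[of n] by (intro mult_right_mono) auto
    then show ?thesis
      by (simp add: mult.assoc)
  qed (simp add: majorant_coeff_def)
qed (use assms in auto)

lemma majorant_deriv_sum_eq:
  assumes "0 \<le> x" "x < 1"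
  shows "majorant_deriv_sum b M x = 4 * b * x + M * x^2 / (1 - x)"
proof -
  have "(\<lambda>n. M * x ^ n - (if n = 0 then M else 0) - (if n = 1 then (M - 4 * b) * x else 0))
      sums (M * (1 / (1 - x)) - M - (M - 4 * b) * x)"
    using assms by (intro sums_diff sums_mult geometric_sums sums_single) auto
  moreover have "M * x ^ n - (if n = 0 then M else 0) - (if n = 1 then (M - 4 * b) * x else 0)
      = real (Suc n) * majorant_coeff b M n * x ^ n" for n
    by (cases "n = 0"; cases "n = 1") (auto simp: majorant_coeff_def field_simps)
  ultimately have "majorant_deriv_sum b M x = M * (1 / (1 - x)) - M - (M - 4 * b) * x"
    unfolding majorant_deriv_sum_def by (simp add: sums_iff)
  also have "\<dots> = 4 * b * x + M * x^2 / (1 - x)"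
    using assms by (simp add: field_simps power2_eq_square)
  finally show ?thesis .
qed

lemma majorant_sum_eq:
  assumes "0 \<le> x" "x < 1"
  shows "x * majorant_sum b M x = 2 * b * x^2 - M * (ln (1 - x) + x + x^2 / 2)"
proof -
  have "(\<lambda>n. - (x ^ n) / of_nat n) sums ln (1 - x)"
    using ln_series'[of "-x"] assms by simp
  then have "(\<lambda>n. - (x ^ Suc n) / of_nat (Suc n)) sums ln (1 - x)"
    by (subst sums_Suc_iff) simp
  then have "(\<lambda>n. - M * (- (x ^ Suc n) / of_nat (Suc n)) - (if n = 0 then M * x else 0)
        - (if n = 1 then (M / 2 - 2 * b) * x^2 else 0))
      sums (- M * ln (1 - x) - M * x - (M / 2 - 2 * b) * x^2)"
    by (intro sums_diff sums_mult sums_single)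
  moreover have "- M * (- (x ^ Suc n) / of_nat (Suc n)) - (if n = 0 then M * x else 0)
        - (if n = 1 then (M / 2 - 2 * b) * x^2 else 0) = x * (majorant_coeff b M n * x ^ n)" for n
    by (cases "n = 0"; cases "n = 1") (auto simp: majorant_coeff_def algebra_simps power2_eq_square)
  moreover have "(\<lambda>n. x * (majorant_coeff b M n * x ^ n)) sums (x * majorant_sum b M x)"
    using assms by (intro sums_mult majorant_sum_sums) auto
  ultimately show ?thesis
    by (simp add: sums_iff algebra_simps)
qed

lemma class_F_coeff_le:
  assumes "f \<in> class_F b M" "1 \<le> n"
  shows "norm (coeff0 f (Suc n)) \<le> majorant_coeff b M n"
proof (cases "n = 1")
  case True
  then show ?thesis
    using assms(1) by (simp add: class_F_def class_A_def majorant_coeff_def numeral_2_eq_2)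
next
  case False
  with assms(2) have "3 \<le> Suc n"
    by simp
  with assms(1) have "norm (coeff0 f (Suc n)) \<le> M / real (Suc n)"
    unfolding class_F_def by blast
  with False assms(2) show ?thesis
    by (simp add: majorant_coeff_def)
qed

lemma class_F_sq_le_majorant:
  assumes f: "f \<in> class_F b M" and z: "z \<noteq> 0" "norm z < 1"
    and "majorant_sum b M (norm z) < 1"
  shows "f z \<noteq> 0 \<and> norm (sq f z - 1)
    \<le> (majorant_deriv_sum b M (norm z) - majorant_sum b M (norm z)) / (1 - majorant_sum b M (norm z))"
proof (rule sq_minus_one_le_majorant[where d = "majorant_coeff b M"])
  show "f holomorphic_on ball 0 1" "f 0 = 0" "deriv f 0 = 1"
    using f by (auto simp: class_F_def class_A_def)
  show "norm (coeff0 f (Suc n)) \<le> majorant_coeff b M n" if "1 \<le> n" for n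
    using f that by (rule class_F_coeff_le)
  show "(\<lambda>n. majorant_coeff b M n * norm z ^ n) sums majorant_sum b M (norm z)"
    "(\<lambda>n. real n * majorant_coeff b M n * norm z ^ n)
      sums (majorant_deriv_sum b M (norm z) - majorant_sum b M (norm z))"
    using z majorant_sum_sums majorant_moment_sums by simp_all
qed (use assms in \<open>simp_all add: majorant_coeff_def\<close>)

lemma f0_sums:
  assumes "norm z < 1"
  shows "(\<lambda>n. f0_coeff b M n * z ^ n) sums f0 M b z"
proof -
  have "(\<lambda>n. z ^ n / of_nat n) sums - Ln (1 - z)"
    using sums_minus[OF Ln_series[of "-z"]] assms by (simp add: power_minus')
  then have "(\<lambda>n. - of_real M * (z ^ n / of_nat n) + (if n = 1 then (1 + of_real M) * z else 0)
        + (if n = 2 then of_real (M / 2 - 2 * b) * z^2 else 0))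
      sums (- of_real M * (- Ln (1 - z)) + (1 + of_real M) * z + of_real (M / 2 - 2 * b) * z^2)"
    by (intro sums_add sums_mult sums_single)
  moreover have "- of_real M * (z ^ n / of_nat n) + (if n = 1 then (1 + of_real M) * z else 0)
        + (if n = 2 then of_real (M / 2 - 2 * b) * z^2 else 0) = f0_coeff b M n * z ^ n" for n
    by (cases "n = 1"; cases "n = 2") (auto simp: f0_coeff_def field_simps power2_eq_square)
  ultimately show ?thesis
    by (simp add: f0_def algebra_simps)
qed

lemma holomorphic_f0: "f0 M b holomorphic_on ball 0 1"
  by (rule power_series_holomorphic[where a = "f0_coeff b M"]) (use f0_sums in auto)

lemma coeff0_f0: "coeff0 (f0 M b) n = f0_coeff b M n"
proof -
  have "f0 M b has_fps_expansion Abs_fps (f0_coeff b M)"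
  proof (rule has_fps_expansionI)
    show "\<forall>\<^sub>F u in nhds 0. (\<lambda>n. fps_nth (Abs_fps (f0_coeff b M)) n * u ^ n) sums f0 M b u"
      unfolding eventually_nhds by (intro exI[of _ "ball 0 1"]) (auto intro: f0_sums)
  qed
  from fps_nth_fps_expansion[OF this, of n] show ?thesis
    by (simp add: coeff0_def)
qed

lemma coeff0_f0_Suc:
  "coeff0 (f0 M b) (Suc n) = of_real ((if n = 0 then 1 else 0) - majorant_coeff b M n)"
  by (cases "n = 0"; cases "n = 1") (auto simp: coeff0_f0 f0_coeff_def majorant_coeff_def)

lemma f0_in_class_F: "f0 M b \<in> class_F b M"
proof -
  have "f0 M b 0 = 0"
    by (simp add: f0_def)
  moreover have "deriv (f0 M b) 0 = 1"
    using coeff0_f0[of 1] by (simp add: coeff0_def f0_coeff_def)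
  moreover have "norm (coeff0 (f0 M b) 2) = 2 * b"
    using b by (simp add: coeff0_f0 f0_coeff_def)
  moreover have "norm (coeff0 (f0 M b) n) \<le> M / real n" if "3 \<le> n" for n
    using that M by (simp add: coeff0_f0 f0_coeff_def norm_divide)
  ultimately show ?thesis
    using holomorphic_f0 by (auto simp: class_F_def class_A_def)
qed

lemma f0_quotient_of_real:
  assumes "0 < x" "x < 1"
  shows "f0 M b (of_real x) / of_real x = of_real (1 - majorant_sum b M x)"
proof -
  have "(\<lambda>n. (if n = 0 then 1 else 0) - majorant_coeff b M n * x ^ n) sums (1 - majorant_sum b M x)"
    using assms by (intro sums_diff sums_single[of 0 "\<lambda>_. 1 :: real", simplified] majorant_sum_sums)
      simp
  moreover have "(\<lambda>n. coeff0 (f0 M b) (Suc n) * of_real x ^ n)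
      = (\<lambda>n. of_real ((if n = 0 then 1 else 0) - majorant_coeff b M n * x ^ n))"
    by (rule ext) (simp add: coeff0_f0_Suc left_diff_distrib)
  ultimately have "(\<lambda>n. coeff0 (f0 M b) (Suc n) * of_real x ^ n) sums of_real (1 - majorant_sum b M x)"
    by (simp only: sums_of_real)
  moreover have "(\<lambda>n. coeff0 (f0 M b) (Suc n) * of_real x ^ n) sums (f0 M b (of_real x) / of_real x)"
    using assms by (intro quotient_coeff0_sums holomorphic_f0) (auto simp: f0_def)
  ultimately show ?thesis
    by (rule sums_unique2[symmetric])
qed

lemma deriv_f0_of_real:
  assumes "0 < x" "x < 1"
  shows "deriv (f0 M b) (of_real x) = of_real (1 - majorant_deriv_sum b M x)"
proof -
  have "(\<lambda>n. (if n = 0 then 1 else 0) - real (Suc n) * majorant_coeff b M n * x ^ n)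
      sums (1 - majorant_deriv_sum b M x)"
    unfolding majorant_deriv_sum_def using assms
    by (intro sums_diff sums_single[of 0 "\<lambda>_. 1 :: real", simplified] summable_sums
        summable_majorant_deriv_sum) simp
  moreover have "(\<lambda>n. of_nat (Suc n) * coeff0 (f0 M b) (Suc n) * of_real x ^ n)
      = (\<lambda>n. of_real ((if n = 0 then 1 else 0) - real (Suc n) * majorant_coeff b M n * x ^ n))"
    by (rule ext) (simp add: coeff0_f0_Suc left_diff_distrib)
  ultimately have "(\<lambda>n. of_nat (Suc n) * coeff0 (f0 M b) (Suc n) * of_real x ^ n)
      sums of_real (1 - majorant_deriv_sum b M x)"
    by (simp only: sums_of_real)
  moreover have "(\<lambda>n. of_nat (Suc n) * coeff0 (f0 M b) (Suc n) * of_real x ^ n)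
      sums deriv (f0 M b) (of_real x)"
    using assms by (intro deriv_coeff0_sums holomorphic_f0) auto
  ultimately show ?thesis
    by (rule sums_unique2[symmetric])
qed

lemma sq_f0_of_real:
  assumes "0 < x" "x < 1"
  shows "sq (f0 M b) (of_real x)
    = of_real ((1 - majorant_deriv_sum b M x) / (1 - majorant_sum b M x))"
proof -
  have "sq (f0 M b) (of_real x) = deriv (f0 M b) (of_real x) / (f0 M b (of_real x) / of_real x)"
    using assms by (simp add: sq_def)
  then show ?thesis
    using assms by (simp add: f0_quotient_of_real deriv_f0_of_real)
qed

context
  fixes \<alpha> :: real
  assumes \<alpha>: "0 \<le> \<alpha>" "\<alpha> < 1"
begin

lemma majorant_gauge_sums:
  assumes "\<bar>x\<bar> < 1"
  shows "(\<lambda>n. (real (Suc n) - \<alpha>) * majorant_coeff b M n * x ^ n) sums majorant_gauge b M \<alpha> x"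
proof -
  have "(\<lambda>n. real (Suc n) * majorant_coeff b M n * x ^ n - \<alpha> * (majorant_coeff b M n * x ^ n))
      sums majorant_gauge b M \<alpha> x"
    unfolding majorant_gauge_def majorant_deriv_sum_def
    using assms by (intro sums_diff sums_mult summable_sums summable_majorant_deriv_sum
        majorant_sum_sums)
  then show ?thesis
    by (simp add: algebra_simps)
qed

lemma strict_mono_on_majorant_gauge: "strict_mono_on {0..<1} (majorant_gauge b M \<alpha>)"
proof (rule strict_mono_onI)
  fix x y :: real
  assume "x \<in> {0..<1}" "y \<in> {0..<1}" "x < y"
  then have "(\<Sum>n. (real (Suc n) - \<alpha>) * majorant_coeff b M n * x ^ n)
      < (\<Sum>n. (real (Suc n) - \<alpha>) * majorant_coeff b M n * y ^ n)"
    using \<alpha> b M majorant_gauge_sums[of y]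
    by (intro powser_strict_mono_nonneg_coeffs[where k = 2])
      (auto simp: majorant_coeff_def sums_iff intro!: mult_nonneg_nonneg)
  then show "majorant_gauge b M \<alpha> x < majorant_gauge b M \<alpha> y"
    using majorant_gauge_sums[of x] majorant_gauge_sums[of y] \<open>x \<in> _\<close> \<open>y \<in> _\<close>
    by (simp add: sums_iff)
qed

lemma majorant_gauge_0: "majorant_gauge b M \<alpha> 0 = 0"
  by (simp add: majorant_gauge_def majorant_sum_def majorant_deriv_sum_def powser_zero
      majorant_coeff_def)

lemma isCont_majorant_gauge: "\<bar>x\<bar> < 1 \<Longrightarrow> isCont (majorant_gauge b M \<alpha>) x"
  unfolding majorant_gauge_def[abs_def]
  by (intro continuous_intros isCont_majorant_sum isCont_majorant_deriv_sum)

lemma ex_majorant_gauge_gt: "\<exists>x. 0 < x \<and> x < 1 \<and> 1 - \<alpha> < majorant_gauge b M \<alpha> x"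
proof -
  define x where "x = 1 - min (1/2) (M/8)"
  have x: "1/2 \<le> x" "x < 1" "8 * (1 - x) \<le> M"
    using M by (auto simp: x_def)
  have "M \<le> 4 * M * x^2"
    using M x power_mono[of "1/2" x 2] by (simp add: power2_eq_square)
  then have "2 * (1 - x) \<le> M * x^2"
    using x by linarith
  then have "2 \<le> M * x^2 / (1 - x)"
    using x by (simp add: le_divide_eq)
  moreover have "0 \<le> 4 * b * x"
    using b x by simp
  ultimately have "2 \<le> majorant_deriv_sum b M x"
    using majorant_deriv_sum_eq[of x] x by simp
  moreover have "majorant_sum b M x \<le> majorant_deriv_sum b M x"
    using majorant_sum_le_moment[of x] majorant_sum_nonneg[of x] x by simp
  then have "(1 - \<alpha>) * majorant_deriv_sum b M x \<le> majorant_gauge b M \<alpha> x"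
    using \<alpha> by (simp add: majorant_gauge_def algebra_simps mult_left_mono)
  ultimately have "(1 - \<alpha>) * 2 \<le> majorant_gauge b M \<alpha> x"
    using \<alpha> mult_left_mono[of 2 "majorant_deriv_sum b M x" "1 - \<alpha>"] by linarith
  then show ?thesis
    using x \<alpha> by (intro exI[of _ x]) auto
qed

lemma r0_eq_iff_majorant_gauge:
  assumes "0 < x" "x < 1"
  shows "r0_eq M b \<alpha> x \<longleftrightarrow> majorant_gauge b M \<alpha> x = 1 - \<alpha>"
proof -
  have key: "x * ((2 * (1 + M) * (1 - \<alpha>) + (2 - \<alpha>) * (M - 4 * b) * x) * (1 - x)
      - 2 * M * (1 + \<alpha> * (1 - x) * ln (1 - x) / x))
    = 2 * (1 - x) * ((1 - \<alpha>) * x - x * majorant_deriv_sum b M x + \<alpha> * (x * majorant_sum b M x))"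
    unfolding majorant_deriv_sum_eq[OF less_imp_le[OF assms(1)] assms(2)]
      majorant_sum_eq[OF less_imp_le[OF assms(1)] assms(2)]
    using assms by (simp add: field_simps power2_eq_square)
  have "r0_eq M b \<alpha> x \<longleftrightarrow> x * ((2 * (1 + M) * (1 - \<alpha>) + (2 - \<alpha>) * (M - 4 * b) * x) * (1 - x)
      - 2 * M * (1 + \<alpha> * (1 - x) * ln (1 - x) / x)) = 0"
    unfolding r0_eq_def using assms by auto
  also have "\<dots> \<longleftrightarrow> x * ((1 - \<alpha>) - majorant_gauge b M \<alpha> x) = 0"
  proof -
    have "(1 - \<alpha>) * x - x * majorant_deriv_sum b M x + \<alpha> * (x * majorant_sum b M x)
        = x * ((1 - \<alpha>) - majorant_gauge b M \<alpha> x)"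
      by (simp add: majorant_gauge_def algebra_simps)
    then show ?thesis
      unfolding key using assms by simp
  qed
  finally show ?thesis
    using assms by auto
qed

lemma ex1_majorant_gauge_root: "\<exists>!r. 0 < r \<and> r < 1 \<and> majorant_gauge b M \<alpha> r = 1 - \<alpha>"
proof -
  obtain y where y: "0 < y" "y < 1" "1 - \<alpha> < majorant_gauge b M \<alpha> y"
    using ex_majorant_gauge_gt by blast
  have "\<exists>r\<ge>0. r \<le> y \<and> majorant_gauge b M \<alpha> r = 1 - \<alpha>"
    using y \<alpha> by (intro IVT' continuous_at_imp_continuous_on ballI isCont_majorant_gauge)
      (auto simp: majorant_gauge_0)
  then obtain r where r: "0 \<le> r" "r \<le> y" "majorant_gauge b M \<alpha> r = 1 - \<alpha>"
    by blast
  then have "r \<noteq> 0"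
    using \<alpha> by (auto simp: majorant_gauge_0)
  with r y have "0 < r \<and> r < 1 \<and> majorant_gauge b M \<alpha> r = 1 - \<alpha>"
    by auto
  moreover have "s = r" if "0 < s \<and> s < 1 \<and> majorant_gauge b M \<alpha> s = 1 - \<alpha>" for s
    using strict_mono_on_eqD[OF strict_mono_on_majorant_gauge, of r s] that r y by auto
  ultimately show ?thesis
    by blast
qed

lemma r0_majorant_gauge:
  "0 < r0 M b \<alpha> \<and> r0 M b \<alpha> < 1 \<and> majorant_gauge b M \<alpha> (r0 M b \<alpha>) = 1 - \<alpha>"
proof -
  have "(\<lambda>r. 0 < r \<and> r < 1 \<and> r0_eq M b \<alpha> r) = (\<lambda>r. 0 < r \<and> r < 1 \<and> majorant_gauge b M \<alpha> r = 1 - \<alpha>)"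
    using r0_eq_iff_majorant_gauge by blast
  then show ?thesis
    unfolding r0_def using theI'[OF ex1_majorant_gauge_root] by simp
qed

lemma majorant_gauge_le_iff:
  "0 \<le> x \<Longrightarrow> x < 1 \<Longrightarrow> majorant_gauge b M \<alpha> x \<le> 1 - \<alpha> \<longleftrightarrow> x \<le> r0 M b \<alpha>"
  using strict_mono_on_less_eq[OF strict_mono_on_majorant_gauge, of x "r0 M b \<alpha>"] r0_majorant_gauge
  by simp

lemma majorant_gauge_less_iff:
  "0 \<le> x \<Longrightarrow> x < 1 \<Longrightarrow> majorant_gauge b M \<alpha> x < 1 - \<alpha> \<longleftrightarrow> x < r0 M b \<alpha>"
  using strict_mono_on_less[OF strict_mono_on_majorant_gauge, of x "r0 M b \<alpha>"] r0_majorant_gauge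
  by simp

lemma majorant_sum_less_one:
  assumes "0 \<le> x" "x < 1" "majorant_gauge b M \<alpha> x \<le> 1 - \<alpha>"
  shows "majorant_sum b M x < 1"
proof -
  have "(2 - \<alpha>) * majorant_sum b M x \<le> majorant_gauge b M \<alpha> x"
    using majorant_sum_le_moment[OF assms(1,2)] by (simp add: majorant_gauge_def algebra_simps)
  then have "(2 - \<alpha>) * majorant_sum b M x < (2 - \<alpha>) * 1"
    using assms(3) by simp
  then show ?thesis
    using \<alpha> mult_less_cancel_left_pos[of "2 - \<alpha>" "majorant_sum b M x" 1] by linarith
qed

lemma majorant_ratio_le_iff:
  assumes "majorant_sum b M x < 1"
  shows "(majorant_deriv_sum b M x - majorant_sum b M x) / (1 - majorant_sum b M x) \<le> 1 - \<alpha>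
    \<longleftrightarrow> majorant_gauge b M \<alpha> x \<le> 1 - \<alpha>"
  using assms by (subst pos_divide_le_eq) (auto simp: majorant_gauge_def algebra_simps)

lemma majorant_ratio_less_iff:
  assumes "majorant_sum b M x < 1"
  shows "(majorant_deriv_sum b M x - majorant_sum b M x) / (1 - majorant_sum b M x) < 1 - \<alpha>
    \<longleftrightarrow> majorant_gauge b M \<alpha> x < 1 - \<alpha>"
  using assms by (subst pos_divide_less_eq) (auto simp: majorant_gauge_def algebra_simps)

lemma class_F_sq_le:
  assumes f: "f \<in> class_F b M" and z: "norm z \<le> r0 M b \<alpha>"
  shows "norm (sq f z - 1) \<le> 1 - \<alpha>"
proof (cases "z = 0")
  case True
  then show ?thesis
    using \<alpha> by (simp add: sq_def)
next
  case False
  have z1: "norm z < 1"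
    using z r0_majorant_gauge by linarith
  then have gauge: "majorant_gauge b M \<alpha> (norm z) \<le> 1 - \<alpha>"
    using z majorant_gauge_le_iff[of "norm z"] by simp
  then have sum: "majorant_sum b M (norm z) < 1"
    using z1 by (intro majorant_sum_less_one) auto
  have "norm (sq f z - 1)
      \<le> (majorant_deriv_sum b M (norm z) - majorant_sum b M (norm z)) / (1 - majorant_sum b M (norm z))"
    using class_F_sq_le_majorant[OF f False z1 sum] by (rule conjunct2)
  also have "\<dots> \<le> 1 - \<alpha>"
    using majorant_ratio_le_iff[OF sum] gauge by (rule iffD2)
  finally show ?thesis .
qed

lemma class_F_sq_less:
  assumes f: "f \<in> class_F b M" and z: "norm z < r0 M b \<alpha>"
  shows "norm (sq f z - 1) < 1 - \<alpha> \<and> (z \<noteq> 0 \<longrightarrow> f z \<noteq> 0)"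
proof (cases "z = 0")
  case True
  then show ?thesis
    using \<alpha> by (simp add: sq_def)
next
  case False
  have z1: "norm z < 1"
    using z r0_majorant_gauge by linarith
  then have gauge: "majorant_gauge b M \<alpha> (norm z) < 1 - \<alpha>"
    using z majorant_gauge_less_iff[of "norm z"] by simp
  then have sum: "majorant_sum b M (norm z) < 1"
    using z1 by (intro majorant_sum_less_one) auto
  note bound = class_F_sq_le_majorant[OF f False z1 sum]
  have "norm (sq f z - 1)
      \<le> (majorant_deriv_sum b M (norm z) - majorant_sum b M (norm z)) / (1 - majorant_sum b M (norm z))"
    using bound by (rule conjunct2)
  also have "\<dots> < 1 - \<alpha>"
    using majorant_ratio_less_iff[OF sum] gauge by (rule iffD2)
  finally show ?thesis
    using bound by blast
qed

lemma sq_f0_r0: "sq (f0 M b) (of_real (r0 M b \<alpha>)) = of_real \<alpha>"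
proof -
  define r where "r = r0 M b \<alpha>"
  have r: "0 < r" "r < 1" "majorant_gauge b M \<alpha> r = 1 - \<alpha>"
    using r0_majorant_gauge by (auto simp: r_def)
  then have "majorant_sum b M r < 1"
    by (intro majorant_sum_less_one) auto
  moreover have "1 - majorant_deriv_sum b M r = \<alpha> * (1 - majorant_sum b M r)"
    using r(3) by (simp add: majorant_gauge_def algebra_simps)
  ultimately show ?thesis
    using sq_f0_of_real[OF r(1,2)] by (simp add: r_def)
qed

lemma Re_sq_f0_less_beyond_r0:
  assumes "r0 M b \<alpha> < s"
  shows "\<exists>x. 0 < x \<and> x < s \<and> x < 1 \<and> Re (sq (f0 M b) (of_real x)) < \<alpha>"
proof -
  define r where "r = r0 M b \<alpha>"
  have r: "0 < r" "r < 1" "majorant_gauge b M \<alpha> r = 1 - \<alpha>"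
    using r0_majorant_gauge by (auto simp: r_def)
  then have "majorant_sum b M r < 1"
    by (intro majorant_sum_less_one) auto
  moreover have "isCont (majorant_sum b M) r"
    using r by (intro isCont_majorant_sum) auto
  ultimately have "\<forall>\<^sub>F x in at_right r. majorant_sum b M x < 1"
    by (intro order_tendstoD(2)[of _ "majorant_sum b M r"])
      (auto simp: isCont_def filterlim_at_split)
  then obtain c where c: "r < c" "\<And>x. r < x \<Longrightarrow> x < c \<Longrightarrow> majorant_sum b M x < 1"
    by (auto simp: eventually_at_right_field)
  define x where "x = (r + min c (min s 1)) / 2"
  have x: "r < x" "x < s" "x < 1" "majorant_sum b M x < 1"
    using c assms r by (auto simp: x_def r_def)
  then have "1 - \<alpha> < majorant_gauge b M \<alpha> x"
    using majorant_gauge_le_iff[of x] r by (auto simp: r_def)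
  then have "(1 - majorant_deriv_sum b M x) / (1 - majorant_sum b M x) < \<alpha>"
    using x(4) by (simp add: majorant_gauge_def divide_less_eq algebra_simps)
  then show ?thesis
    using x r sq_f0_of_real[of x] by (intro exI[of _ x]) auto
qed

lemma starlike_radius_class_F: "starlike_radius \<alpha> (class_F b M) = r0 M b \<alpha>"
  unfolding starlike_radius_def
proof (rule Sup_eq_threshold)
  show "0 < r0 M b \<alpha>" "r0 M b \<alpha> \<le> 1"
    using r0_majorant_gauge by auto
  have "f z \<noteq> 0 \<and> \<alpha> < Re (sq f z)" if "f \<in> class_F b M" "norm z < r0 M b \<alpha>" "z \<noteq> 0" for f z
  proof -
    have "norm (sq f z - 1) < 1 - \<alpha>" "f z \<noteq> 0"
      using class_F_sq_less[OF that(1,2)] that(3) by auto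
    then show ?thesis
      using abs_Re_le_cmod[of "sq f z - 1"] by auto
  qed
  moreover have "\<alpha> < Re (sq f 0)" for f
    using \<alpha> by (simp add: sq_def)
  ultimately show "\<forall>f\<in>class_F b M. (\<forall>z. 0 < norm z \<and> norm z < r0 M b \<alpha> \<longrightarrow> f z \<noteq> 0)
      \<and> (\<forall>z. norm z < r0 M b \<alpha> \<longrightarrow> \<alpha> < Re (sq f z))"
    by (metis norm_zero zero_less_norm_iff)
next
  fix s
  assume "r0 M b \<alpha> < s"
  then obtain x where "0 < x" "x < s" "Re (sq (f0 M b) (of_real x)) < \<alpha>"
    using Re_sq_f0_less_beyond_r0 by blast
  then show "\<not> (\<forall>f\<in>class_F b M. (\<forall>z. 0 < norm z \<and> norm z < s \<longrightarrow> f z \<noteq> 0)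
      \<and> (\<forall>z. norm z < s \<longrightarrow> \<alpha> < Re (sq f z)))"
    using f0_in_class_F by (metis norm_of_real abs_of_pos not_less_iff_gr_or_eq)
qed

end

lemma parabolic_radius_class_F: "parabolic_radius (class_F b M) = r0 M b (1/2)"
  unfolding parabolic_radius_def
proof (rule Sup_eq_threshold)
  show "0 < r0 M b (1/2)" "r0 M b (1/2) \<le> 1"
    using r0_majorant_gauge[of "1/2"] by auto
  have "norm (sq f z - 1) < Re (sq f z)" if "f \<in> class_F b M" "norm z < r0 M b (1/2)" for f z
  proof -
    have "norm (sq f z - 1) < 1/2"
      using class_F_sq_less[of "1/2", OF _ _ that] by auto
    then show ?thesis
      using abs_Re_le_cmod[of "sq f z - 1"] by auto
  qed
  then show "\<forall>f\<in>class_F b M. \<forall>z. norm z < r0 M b (1/2) \<longrightarrow> norm (sq f z - 1) < Re (sq f z)"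
    by blast
next
  fix s
  assume "r0 M b (1/2) < s"
  then obtain x where x: "0 < x" "x < s" "Re (sq (f0 M b) (of_real x)) < 1/2"
    using Re_sq_f0_less_beyond_r0[of "1/2"] by auto
  have "Re (sq (f0 M b) (of_real x)) \<le> norm (sq (f0 M b) (of_real x) - 1)"
    using x(3) abs_Re_le_cmod[of "sq (f0 M b) (of_real x) - 1"] by auto
  then show "\<not> (\<forall>f\<in>class_F b M. \<forall>z. norm z < s \<longrightarrow> norm (sq f z - 1) < Re (sq f z))"
    using f0_in_class_F x(1,2) by (metis norm_of_real abs_of_pos not_less)
qed

end

theorem theorem2p8:
  fixes b M \<alpha> :: real
  assumes "0 \<le> b" "b \<le> 1" "M > 0" "0 \<le> \<alpha>" "\<alpha> < 1"
  shows "(\<forall>f\<in>class_F b M. \<forall>z. norm z \<le> r0 M b \<alpha> \<longrightarrow> norm (sq f z - 1) \<le> 1 - \<alpha>)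
       \<and> starlike_radius \<alpha> (class_F b M) = r0 M b \<alpha>
       \<and> parabolic_radius (class_F b M) = r0 M b (1/2)
       \<and> f0 M b \<in> class_F b M
       \<and> sq (f0 M b) (complex_of_real (r0 M b \<alpha>)) = complex_of_real \<alpha>"
  using class_F_sq_le[OF assms(1,3-5)] starlike_radius_class_F[OF assms(1,3-5)]
    parabolic_radius_class_F[OF assms(1,3)] f0_in_class_F[OF assms(1,3)]
    sq_f0_r0[OF assms(1,3-5)]
  by blast

end
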